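(* Let $P$ be a trivial poset. If $w(P)=1$, then $R(P,Q_n)=n+h(P)-1$ for every positive integer $n$. If $w(P)\ge2$, then for every positive integer $n$, $$n+h(P)+1\le R(P,Q_n)<n+h(P)+\log(w(P))+\tfrac12\log\log(w(P))+1.$$
   Context: The poset $\mathcal{V}$ has three elements $A,B,C$ with $C\le A$, $C\le B$, $A$ and $B$ incomparable; the poset $\Lambda$ (upside-down $\mathcal{V}$) has three elements $A,B,C$ with $A\le C$, $B\le C$, $A$ and $B$ incomparable. A poset is trivial if it contains no induced subposet isomorphic to $\mathcal{V}$ or to $\Lambda$ (equivalently, it is a disjoint union of chains that are pairwise element-wise incomparable). The height $h(P)$ is the size of a largest chain in $P$; the width $w(P)$ is the size of a largest antichain in $P$. $Q_n$ is the Boolean lattice of subsets of an $n$-element set ordered by inclusion. $R(P_1,P_2)$ is the smallest integer $N$ such that every blue/red coloring of the elements of $Q_N$ contains an all-blue induced copy of $P_1$ or an all-red induced copy of $P_2$. $\log$ is base $2$. *)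

theory Defs
  imports Complex_Main
begin

definition is_poset :: "'a set \<Rightarrow> ('a \<times> 'a) set \<Rightarrow> bool" where
  "is_poset A r \<longleftrightarrow> finite A \<and> partial_order_on A r"

definition is_chain :: "'a set \<Rightarrow> ('a \<times> 'a) set \<Rightarrow> 'a set \<Rightarrow> bool" where
  "is_chain A r C \<longleftrightarrow> C \<subseteq> A \<and> (\<forall>x\<in>C. \<forall>y\<in>C. (x, y) \<in> r \<or> (y, x) \<in> r)"

definition is_antichain :: "'a set \<Rightarrow> ('a \<times> 'a) set \<Rightarrow> 'a set \<Rightarrow> bool" where
  "is_antichain A r C \<longleftrightarrow> C \<subseteq> A \<and> (\<forall>x\<in>C. \<forall>y\<in>C. x \<noteq> y \<longrightarrow> (x, y) \<notin> r)"

definition height :: "'a set \<Rightarrow> ('a \<times> 'a) set \<Rightarrow> nat" where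
  "height A r = Max (card ` {C. is_chain A r C})"

definition width :: "'a set \<Rightarrow> ('a \<times> 'a) set \<Rightarrow> nat" where
  "width A r = Max (card ` {C. is_antichain A r C})"

definition incomparable :: "('a \<times> 'a) set \<Rightarrow> 'a \<Rightarrow> 'a \<Rightarrow> bool" where
  "incomparable r x y \<longleftrightarrow> (x, y) \<notin> r \<and> (y, x) \<notin> r"

definition contains_V :: "'a set \<Rightarrow> ('a \<times> 'a) set \<Rightarrow> bool" where
  "contains_V A r \<longleftrightarrow> (\<exists>a\<in>A. \<exists>b\<in>A. \<exists>c\<in>A. a \<noteq> b \<and> a \<noteq> c \<and> b \<noteq> c \<and>
      (c, a) \<in> r \<and> (c, b) \<in> r \<and> incomparable r a b)"

definition contains_Lambda :: "'a set \<Rightarrow> ('a \<times> 'a) set \<Rightarrow> bool" where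
  "contains_Lambda A r \<longleftrightarrow> (\<exists>a\<in>A. \<exists>b\<in>A. \<exists>c\<in>A. a \<noteq> b \<and> a \<noteq> c \<and> b \<noteq> c \<and>
      (a, c) \<in> r \<and> (b, c) \<in> r \<and> incomparable r a b)"

definition trivial_poset :: "'a set \<Rightarrow> ('a \<times> 'a) set \<Rightarrow> bool" where
  "trivial_poset A r \<longleftrightarrow> \<not> contains_V A r \<and> \<not> contains_Lambda A r"

definition Qcar :: "nat \<Rightarrow> nat set set" where
  "Qcar n = Pow {..<n}"

definition Qrel :: "nat \<Rightarrow> (nat set \<times> nat set) set" where
  "Qrel n = {(X, Y). X \<in> Qcar n \<and> Y \<in> Qcar n \<and> X \<subseteq> Y}"

definition induced_embedding ::
  "'a set \<Rightarrow> ('a \<times> 'a) set \<Rightarrow> 'b set \<Rightarrow> ('b \<times> 'b) set \<Rightarrow> ('a \<Rightarrow> 'b) \<Rightarrow> bool" where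
  "induced_embedding A r B s f \<longleftrightarrow> inj_on f A \<and> f ` A \<subseteq> B \<and>
     (\<forall>x\<in>A. \<forall>y\<in>A. (x, y) \<in> r \<longleftrightarrow> (f x, f y) \<in> s)"

text \<open>Every blue/red colouring (blue = True) of Q_N contains a blue induced copy of P1
  or a red induced copy of P2.\<close>

definition ramsey_arrow ::
  "'a set \<Rightarrow> ('a \<times> 'a) set \<Rightarrow> 'b set \<Rightarrow> ('b \<times> 'b) set \<Rightarrow> nat \<Rightarrow> bool" where
  "ramsey_arrow A1 r1 A2 r2 N \<longleftrightarrow>
     (\<forall>c :: nat set \<Rightarrow> bool.
        (\<exists>f. induced_embedding A1 r1 (Qcar N) (Qrel N) f \<and> (\<forall>x\<in>A1. c (f x))) \<or>
        (\<exists>g. induced_embedding A2 r2 (Qcar N) (Qrel N) g \<and> (\<forall>x\<in>A2. \<not> c (g x))))"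

definition poset_ramsey ::
  "'a set \<Rightarrow> ('a \<times> 'a) set \<Rightarrow> 'b set \<Rightarrow> ('b \<times> 'b) set \<Rightarrow> nat" where
  "poset_ramsey A1 r1 A2 r2 = (LEAST N. ramsey_arrow A1 r1 A2 r2 N)"

end

theory Submission
  imports Defs
begin

text \<open>
  A trivial poset is a disjoint union of at most w(P) pairwise incomparable chains (its
  comparability classes), each of size at most h(P).

  Colouring blue exactly the sets of size at least n leaves no red Q_n (its top
  has size at least n), and a blue copy of P needs h(P) distinct levels among n..N. For
  w(P) \<ge> 2, colour blue the empty set and the sets of size at least n + 1; a red Q_n would have
  a nonempty bottom and hence a top of size at least n + 1. A longest chain of a blue copy of P
  avoids the empty set, as some element of P is incomparable to all of it, so for N \<le> n + h(P)
  it fills the levels n+1..N and contains the top, which is comparable to everything.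

  Let N = n + h(P) - 1 + k and give every comparability class its own
  (k div 2)-subset S of the last k coordinates, which is possible when w(P) \<le> binom(k, k div 2).
  In the column {U \<union> S | U \<subseteq> first n + h(P) - 1 coordinates} either there is a red Q_n or
  a blue chain of length h(P); blue chains in different columns are incomparable because their
  traces on the last k coordinates are distinct sets of equal size. The least admissible k is
  estimated via binom(m, m div 2)^2 (2m + 2) \<ge> 4^m.
\<close>

lemma is_posetD:
  assumes "is_poset A r"
  shows "finite A" "x \<in> A \<Longrightarrow> (x, x) \<in> r" "trans r" "antisym r"
  using assms unfolding is_poset_def partial_order_on_def preorder_on_def refl_on_def by auto

lemma finite_chains:
  assumes "finite A"
  shows "finite {C. is_chain A r C}"
  using assms by (rule finite_subset[rotated, OF finite_Pow_iff[THEN iffD2]]) (auto simp: is_chain_def)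

lemma finite_antichains:
  assumes "finite A"
  shows "finite {C. is_antichain A r C}"
  using assms by (rule finite_subset[rotated, OF finite_Pow_iff[THEN iffD2]]) (auto simp: is_antichain_def)

lemma card_le_height:
  assumes "is_poset A r" "is_chain A r C"
  shows "card C \<le> height A r"
  using finite_chains[OF is_posetD(1)[OF assms(1)]] assms(2) unfolding height_def by (intro Max_ge) auto

lemma height_attained:
  assumes "is_poset A r"
  obtains C where "is_chain A r C" "card C = height A r"
proof -
  have "{} \<in> {C. is_chain A r C}" by (simp add: is_chain_def)
  then have "height A r \<in> card ` {C. is_chain A r C}"
    using finite_chains[OF is_posetD(1)[OF assms]] unfolding height_def by (intro Max_in) auto
  then show ?thesis using that by auto
qed

lemma card_le_width:
  assumes "is_poset A r" "is_antichain A r C"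
  shows "card C \<le> width A r"
  using finite_antichains[OF is_posetD(1)[OF assms(1)]] assms(2) unfolding width_def by (intro Max_ge) auto

lemma width_attained:
  assumes "is_poset A r"
  obtains C where "is_antichain A r C" "card C = width A r"
proof -
  have "{} \<in> {C. is_antichain A r C}" by (simp add: is_antichain_def)
  then have "width A r \<in> card ` {C. is_antichain A r C}"
    using finite_antichains[OF is_posetD(1)[OF assms]] unfolding width_def by (intro Max_in) auto
  then show ?thesis using that by auto
qed

lemma height_pos_if_width_pos:
  assumes "is_poset A r" "1 \<le> width A r"
  shows "1 \<le> height A r"
proof -
  obtain D where D: "is_antichain A r D" "card D = width A r"
    using width_attained[OF assms(1)] .
  then obtain a where "a \<in> A"
    using assms(2) unfolding is_antichain_def by fastforce
  then have "is_chain A r {a}" using is_posetD(2)[OF assms(1)] by (simp add: is_chain_def)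
  then show ?thesis using card_le_height[OF assms(1)] by fastforce
qed

section \<open>Comparability classes of trivial posets\<close>

lemma trivial_poset_comparable_trans:
  assumes P: "is_poset A r" and T: "trivial_poset A r"
    and xyz: "x \<in> A" "y \<in> A" "z \<in> A"
    and "\<not> incomparable r x y" "\<not> incomparable r y z"
  shows "\<not> incomparable r x z"
proof
  assume xz: "incomparable r x z"
  have neq: "x \<noteq> y" "y \<noteq> z" "x \<noteq> z"
    using assms(6,7) xz is_posetD(2)[OF P] xyz unfolding incomparable_def by auto
  consider "(x, y) \<in> r" "(y, z) \<in> r" | "(y, x) \<in> r" "(z, y) \<in> r"
    | "(x, y) \<in> r" "(z, y) \<in> r" | "(y, x) \<in> r" "(y, z) \<in> r"
    using assms(6,7) unfolding incomparable_def by blast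
  then show False
  proof cases
    case 3
    then have "contains_Lambda A r"
      unfolding contains_Lambda_def using neq xz xyz by blast
    then show False using T by (simp add: trivial_poset_def)
  next
    case 4
    then have "contains_V A r"
      unfolding contains_V_def using neq xz xyz by blast
    then show False using T by (simp add: trivial_poset_def)
  qed (use is_posetD(3)[OF P] xz in \<open>unfold incomparable_def trans_def, blast\<close>)+
qed

definition comparability_class :: "'a set \<Rightarrow> ('a \<times> 'a) set \<Rightarrow> 'a \<Rightarrow> 'a set" where
  "comparability_class A r x = {y \<in> A. \<not> incomparable r x y}"

lemma comparability_class_self:
  assumes "is_poset A r" "x \<in> A"
  shows "x \<in> comparability_class A r x"
  using assms is_posetD(2) by (fastforce simp: comparability_class_def incomparable_def)

lemma comparability_class_eq_iff:
  assumes P: "is_poset A r" and T: "trivial_poset A r" and xy: "x \<in> A" "y \<in> A"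
  shows "comparability_class A r x = comparability_class A r y \<longleftrightarrow> \<not> incomparable r x y"
proof
  assume "comparability_class A r x = comparability_class A r y"
  then show "\<not> incomparable r x y"
    using comparability_class_self[OF P xy(2)] unfolding comparability_class_def by blast
next
  assume "\<not> incomparable r x y"
  then have "\<not> incomparable r y x" by (auto simp: incomparable_def)
  then show "comparability_class A r x = comparability_class A r y"
    using trivial_poset_comparable_trans[OF P T] \<open>\<not> incomparable r x y\<close> xy
    unfolding comparability_class_def by blast
qed

lemma comparability_class_is_chain:
  assumes P: "is_poset A r" and T: "trivial_poset A r" and x: "x \<in> A"
  shows "is_chain A r (comparability_class A r x)"
  unfolding is_chain_def
proof (intro conjI ballI)
  show "comparability_class A r x \<subseteq> A" by (auto simp: comparability_class_def)
next
  fix y z assume "y \<in> comparability_class A r x" "z \<in> comparability_class A r x"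
  then have yz: "y \<in> A" "z \<in> A" "\<not> incomparable r y x" "\<not> incomparable r x z"
    by (auto simp: comparability_class_def incomparable_def)
  then have "\<not> incomparable r y z"
    using trivial_poset_comparable_trans[OF P T yz(1) x yz(2)] by blast
  then show "(y, z) \<in> r \<or> (z, y) \<in> r" by (simp add: incomparable_def)
qed

lemma card_comparability_classes_le_width:
  assumes P: "is_poset A r" and T: "trivial_poset A r"
  shows "card (comparability_class A r ` A) \<le> width A r"
proof -
  define rep where "rep K = (SOME x. x \<in> A \<and> K = comparability_class A r x)" for K
  have rep: "rep K \<in> A" "comparability_class A r (rep K) = K" if "K \<in> comparability_class A r ` A" for K
    using someI_ex[of "\<lambda>x. x \<in> A \<and> K = comparability_class A r x"] that
    unfolding rep_def by auto
  have inj: "inj_on rep (comparability_class A r ` A)"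
    using rep(2) by (metis inj_onI)
  have "is_antichain A r (rep ` comparability_class A r ` A)"
    unfolding is_antichain_def
  proof (intro conjI ballI impI)
    fix x y assume x: "x \<in> rep ` comparability_class A r ` A"
      and y: "y \<in> rep ` comparability_class A r ` A" and "x \<noteq> y"
    then have "comparability_class A r x \<noteq> comparability_class A r y"
      using rep by auto
    then have "incomparable r x y"
      using comparability_class_eq_iff[OF P T] rep(1) x y by blast
    then show "(x, y) \<notin> r" by (simp add: incomparable_def)
  qed (use rep in blast)
  then have "card (rep ` comparability_class A r ` A) \<le> width A r"
    by (rule card_le_width[OF P])
  then show ?thesis
    using card_image[OF inj] by simp
qed

lemma exists_incomparable_to_chain:
  assumes P: "is_poset A r" and T: "trivial_poset A r" and W: "2 \<le> width A r"
    and C: "is_chain A r C"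
  obtains x where "x \<in> A" "\<forall>y\<in>C. incomparable r x y"
proof -
  obtain D where D: "is_antichain A r D" "card D = width A r"
    using width_attained[OF P] .
  then have "finite D" "1 < card D"
    using W is_posetD(1)[OF P] unfolding is_antichain_def by (auto intro: finite_subset)
  then obtain a b where ab: "a \<in> D" "b \<in> D" "a \<noteq> b"
    using card_le_Suc0_iff_eq[of D] by (auto simp: not_le[symmetric])
  then have abA: "a \<in> A" "b \<in> A" and "incomparable r a b"
    using D unfolding is_antichain_def incomparable_def by auto
  show ?thesis
  proof (cases "C = {}")
    case True
    then show ?thesis using that abA by blast
  next
    case False
    then obtain c where c: "c \<in> C" by blast
    have cA: "c \<in> A" using C c by (auto simp: is_chain_def)
    have "\<not> (\<not> incomparable r a c \<and> \<not> incomparable r c b)"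
      using trivial_poset_comparable_trans[OF P T abA(1) cA abA(2)] \<open>incomparable r a b\<close> by blast
    then obtain x where x: "x \<in> A" "incomparable r x c"
      using abA by (auto simp: incomparable_def)
    have "incomparable r x y" if "y \<in> C" for y
    proof (rule ccontr)
      assume "\<not> incomparable r x y"
      moreover have "\<not> incomparable r y c" "y \<in> A"
        using C c that unfolding is_chain_def incomparable_def by auto
      ultimately show False
        using trivial_poset_comparable_trans[OF P T x(1) _ cA] x(2) by blast
    qed
    then show ?thesis using that x(1) by blast
  qed
qed

section \<open>Embeddings into the Boolean lattice and lower bounds\<close>

lemma induced_embedding_Qcar_subset:
  assumes "induced_embedding A r (Qcar N) (Qrel N) f" "x \<in> A"
  shows "f x \<subseteq> {..<N}"
  using assms unfolding induced_embedding_def Qcar_def by auto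

lemma induced_embedding_Qcar_card_le:
  assumes "induced_embedding A r (Qcar N) (Qrel N) f" "x \<in> A"
  shows "card (f x) \<le> N"
  using card_mono[OF finite_lessThan induced_embedding_Qcar_subset[OF assms]] by simp

lemma induced_embedding_Qcar_le_iff:
  assumes "induced_embedding A r (Qcar N) (Qrel N) f" "x \<in> A" "y \<in> A"
  shows "(x, y) \<in> r \<longleftrightarrow> f x \<subseteq> f y"
  using assms unfolding induced_embedding_def Qrel_def Qcar_def by auto

lemma inj_on_card_chain:
  assumes "chain\<^sub>\<subseteq> F" "\<And>E. E \<in> F \<Longrightarrow> finite E"
  shows "inj_on card F"
  using assms unfolding chain_subset_def by (metis card_subset_eq inj_onI)

lemma card_levels_of_embedded_chain:
  assumes f: "induced_embedding A r (Qcar N) (Qrel N) f" and C: "is_chain A r C"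
  shows "card (card ` f ` C) = card C"
proof -
  have CA: "C \<subseteq> A" using C by (simp add: is_chain_def)
  have "chain\<^sub>\<subseteq> (f ` C)"
    using C induced_embedding_Qcar_le_iff[OF f] CA unfolding is_chain_def chain_subset_def by blast
  then have "inj_on card (f ` C)"
    using induced_embedding_Qcar_subset[OF f] CA by (intro inj_on_card_chain) (auto intro: finite_subset)
  moreover have "inj_on f C"
    using f CA unfolding induced_embedding_def by (auto intro: inj_on_subset)
  ultimately show ?thesis by (simp add: card_image)
qed

lemma card_top_of_embedded_cube:
  assumes g: "induced_embedding (Qcar n) (Qrel n) (Qcar N) (Qrel N) g"
  shows "card (g {}) + n \<le> card (g {..<n})"
proof -
  have "card (g {}) + i \<le> card (g {..<i})" if "i \<le> n" for i
    using that
  proof (induction i)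
    case (Suc i)
    have mem: "{..<i} \<in> Qcar n" "{..<Suc i} \<in> Qcar n" using Suc.prems by (auto simp: Qcar_def)
    have "({..<i}, {..<Suc i}) \<in> Qrel n" using mem by (auto simp: Qrel_def)
    then have "g {..<i} \<subseteq> g {..<Suc i}"
      using induced_embedding_Qcar_le_iff[OF g mem] by blast
    moreover have "g {..<i} \<noteq> g {..<Suc i}"
      using g mem unfolding induced_embedding_def inj_on_def by (metis lessThan_iff lessI less_irrefl)
    moreover have "finite (g {..<Suc i})"
      using induced_embedding_Qcar_subset[OF g mem(2)] by (auto intro: finite_subset)
    ultimately have "card (g {..<i}) < card (g {..<Suc i})"
      by (intro psubset_card_mono) auto
    then show ?case using Suc by simp
  qed simp
  then show ?thesis by simp
qed

lemma not_ramsey_arrow_below_height: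
  assumes P: "is_poset A r" and h: "1 \<le> height A r" and N: "N + 2 \<le> n + height A r"
  shows "\<not> ramsey_arrow A r (Qcar n) (Qrel n) N"
proof -
  define c where "c X \<longleftrightarrow> n \<le> card X" for X :: "nat set"
  have no_blue: False if f: "induced_embedding A r (Qcar N) (Qrel N) f" and blue: "\<forall>x\<in>A. c (f x)" for f
  proof -
    obtain C where C: "is_chain A r C" "card C = height A r" using height_attained[OF P] .
    have "card ` f ` C \<subseteq> {n..N}"
      using C(1) blue induced_embedding_Qcar_card_le[OF f] unfolding c_def is_chain_def by auto
    then have "card (card ` f ` C) \<le> card {n..N}" by (intro card_mono) auto
    then show False
      using card_levels_of_embedded_chain[OF f C(1)] C(2) h N by simp
  qed
  have no_red: False
    if g: "induced_embedding (Qcar n) (Qrel n) (Qcar N) (Qrel N) g" and red: "\<forall>X\<in>Qcar n. \<not> c (g X)" for g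
  proof -
    have "{..<n} \<in> Qcar n" by (simp add: Qcar_def)
    then show False using card_top_of_embedded_cube[OF g] red unfolding c_def by fastforce
  qed
  show ?thesis unfolding ramsey_arrow_def using no_blue no_red by blast
qed

lemma not_ramsey_arrow_at_height:
  assumes P: "is_poset A r" and T: "trivial_poset A r" and W: "2 \<le> width A r"
    and N: "N \<le> n + height A r"
  shows "\<not> ramsey_arrow A r (Qcar n) (Qrel n) N"
proof -
  define c where "c X \<longleftrightarrow> X = {} \<or> n + 1 \<le> card X" for X :: "nat set"
  have no_blue: False if f: "induced_embedding A r (Qcar N) (Qrel N) f" and blue: "\<forall>x\<in>A. c (f x)" for f
  proof -
    obtain C where C: "is_chain A r C" "card C = height A r" using height_attained[OF P] .
    then have CA: "C \<subseteq> A" by (simp add: is_chain_def)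
    obtain x where x: "x \<in> A" "\<forall>y\<in>C. incomparable r x y"
      using exists_incomparable_to_chain[OF P T W C(1)] .
    have incomp: "\<not> f y \<subseteq> f x" "\<not> f x \<subseteq> f y" if "y \<in> C" for y
    proof -
      have y: "y \<in> A" and "incomparable r x y" using x that CA by auto
      then show "\<not> f y \<subseteq> f x" "\<not> f x \<subseteq> f y"
        using induced_embedding_Qcar_le_iff[OF f x(1) y] induced_embedding_Qcar_le_iff[OF f y x(1)]
        unfolding incomparable_def by simp_all
    qed
    have "card (f y) \<in> {n+1..N}" if y: "y \<in> C" for y
    proof -
      have yA: "y \<in> A" using CA y by blast
      have "f y \<noteq> {}" using incomp(1)[OF y] by auto
      then have "n + 1 \<le> card (f y)" using blue yA unfolding c_def by blast
      then show ?thesis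
        using induced_embedding_Qcar_card_le[OF f yA] by simp
    qed
    then have levels: "card ` f ` C \<subseteq> {n+1..N}" by blast
    have card_levels: "card (card ` f ` C) = height A r"
      using card_levels_of_embedded_chain[OF f C(1)] C(2) by simp
    moreover have "height A r \<le> N - n"
      using card_mono[OF _ levels] card_levels by simp
    ultimately have "card ` f ` C = {n+1..N}"
      using levels N by (intro card_subset_eq) auto
    moreover have "n + 1 \<le> N"
      using \<open>height A r \<le> N - n\<close> height_pos_if_width_pos[OF P] W by simp
    ultimately have "N \<in> card ` f ` C" by simp
    then obtain y where y: "y \<in> C" "card (f y) = N" by blast
    then have "f y = {..<N}"
      using card_subset_eq[OF finite_lessThan induced_embedding_Qcar_subset[OF f]] CA by auto
    then show False
      using incomp(2)[OF y(1)] induced_embedding_Qcar_subset[OF f x(1)] by simp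
  qed
  have no_red: False
    if g: "induced_embedding (Qcar n) (Qrel n) (Qcar N) (Qrel N) g" and red: "\<forall>X\<in>Qcar n. \<not> c (g X)" for g
  proof -
    have "{} \<in> Qcar n" "{..<n} \<in> Qcar n" by (auto simp: Qcar_def)
    then have "g {} \<noteq> {}" "card (g {..<n}) < n + 1"
      using red unfolding c_def by auto
    moreover have "finite (g {})"
      using induced_embedding_Qcar_subset[OF g \<open>{} \<in> Qcar n\<close>] finite_subset by blast
    ultimately show False
      using card_top_of_embedded_cube[OF g] card_gt_0_iff[of "g {}"] by simp
  qed
  show ?thesis unfolding ramsey_arrow_def using no_blue no_red by blast
qed

section \<open>Embedding a trivial poset into separated chains\<close>

definition linear_order_within :: "'b set \<Rightarrow> ('b \<times> 'b) set \<Rightarrow> bool" where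
  "linear_order_within K R \<longleftrightarrow> (\<forall>x\<in>K. (x, x) \<in> R)
     \<and> (\<forall>x\<in>K. \<forall>y\<in>K. (x, y) \<in> R \<longrightarrow> (y, x) \<in> R \<longrightarrow> x = y)
     \<and> (\<forall>x\<in>K. \<forall>y\<in>K. \<forall>z\<in>K. (x, y) \<in> R \<longrightarrow> (y, z) \<in> R \<longrightarrow> (x, z) \<in> R)
     \<and> (\<forall>x\<in>K. \<forall>y\<in>K. (x, y) \<in> R \<or> (y, x) \<in> R)"

definition rank :: "'b set \<Rightarrow> ('b \<times> 'b) set \<Rightarrow> 'b \<Rightarrow> nat" where
  "rank K R x = card {y \<in> K. (y, x) \<in> R}"

lemma linear_order_withinD:
  assumes "linear_order_within K R"
  shows "x \<in> K \<Longrightarrow> (x, x) \<in> R"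
    "x \<in> K \<Longrightarrow> y \<in> K \<Longrightarrow> (x, y) \<in> R \<Longrightarrow> (y, x) \<in> R \<Longrightarrow> x = y"
    "x \<in> K \<Longrightarrow> y \<in> K \<Longrightarrow> z \<in> K \<Longrightarrow> (x, y) \<in> R \<Longrightarrow> (y, z) \<in> R \<Longrightarrow> (x, z) \<in> R"
    "x \<in> K \<Longrightarrow> y \<in> K \<Longrightarrow> (x, y) \<notin> R \<Longrightarrow> (y, x) \<in> R"
  using assms unfolding linear_order_within_def by blast+

lemma rank_le_rank_iff:
  assumes L: "linear_order_within K R" and K: "finite K" and xy: "x \<in> K" "y \<in> K"
  shows "rank K R x \<le> rank K R y \<longleftrightarrow> (x, y) \<in> R"
proof
  assume xy_R: "(x, y) \<in> R"
  have "{z \<in> K. (z, x) \<in> R} \<subseteq> {z \<in> K. (z, y) \<in> R}"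
    using linear_order_withinD(3)[OF L _ xy _ xy_R] by blast
  then show "rank K R x \<le> rank K R y"
    unfolding rank_def using K by (intro card_mono) auto
next
  assume le: "rank K R x \<le> rank K R y"
  show "(x, y) \<in> R"
  proof (rule ccontr)
    assume not_R: "(x, y) \<notin> R"
    then have yx_R: "(y, x) \<in> R" using linear_order_withinD(4)[OF L xy] by blast
    have "{z \<in> K. (z, y) \<in> R} \<subseteq> {z \<in> K. (z, x) \<in> R}"
      using linear_order_withinD(3)[OF L _ xy(2,1) _ yx_R] by blast
    moreover have "x \<in> {z \<in> K. (z, x) \<in> R}" "x \<notin> {z \<in> K. (z, y) \<in> R}"
      using linear_order_withinD(1)[OF L xy(1)] xy not_R by auto
    ultimately have "rank K R y < rank K R x"
      unfolding rank_def using K by (intro psubset_card_mono) auto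
    then show False using le by simp
  qed
qed

lemma rank_image:
  assumes L: "linear_order_within K R" and K: "finite K"
  shows "rank K R ` K = {1..card K}"
proof (rule card_subset_eq)
  have "x \<in> {y \<in> K. (y, x) \<in> R}" if "x \<in> K" for x
    using linear_order_withinD(1)[OF L that] that by blast
  then have "0 < rank K R x \<and> rank K R x \<le> card K" if "x \<in> K" for x
    unfolding rank_def using K that by (auto simp: card_gt_0_iff intro: card_mono)
  then show "rank K R ` K \<subseteq> {1..card K}" by force
  have "inj_on (rank K R) K"
  proof (rule inj_onI)
    fix x y assume "x \<in> K" "y \<in> K" "rank K R x = rank K R y"
    then have "(x, y) \<in> R" "(y, x) \<in> R"
      using rank_le_rank_iff[OF L K, of x y] rank_le_rank_iff[OF L K, of y x] by simp_all
    then show "x = y" using linear_order_withinD(2)[OF L \<open>x \<in> K\<close> \<open>y \<in> K\<close>] by blast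
  qed
  then show "card (rank K R ` K) = card {1..card K}"
    by (simp add: card_image)
qed simp

lemma linear_order_within_embedding:
  assumes LK: "linear_order_within K R" and LC: "linear_order_within C R'"
    and fin: "finite K" "finite C" and card: "card K \<le> card C"
  obtains \<phi> where "\<forall>x\<in>K. \<phi> x \<in> C" "\<forall>x\<in>K. \<forall>y\<in>K. (x, y) \<in> R \<longleftrightarrow> (\<phi> x, \<phi> y) \<in> R'"
proof
  define \<phi> where "\<phi> x = inv_into C (rank C R') (rank K R x)" for x
  have rank_in: "rank K R x \<in> rank C R' ` C" if "x \<in> K" for x
  proof -
    have "rank K R x \<in> {1..card K}" using rank_image[OF LK fin(1)] that by blast
    then show ?thesis using rank_image[OF LC fin(2)] card by auto
  qed
  show \<phi>_in: "\<forall>x\<in>K. \<phi> x \<in> C"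
    unfolding \<phi>_def using rank_in by (blast intro: inv_into_into)
  have rank_\<phi>: "rank C R' (\<phi> x) = rank K R x" if "x \<in> K" for x
    unfolding \<phi>_def using rank_in[OF that] by (rule f_inv_into_f)
  show "\<forall>x\<in>K. \<forall>y\<in>K. (x, y) \<in> R \<longleftrightarrow> (\<phi> x, \<phi> y) \<in> R'"
  proof (intro ballI)
    fix x y assume "x \<in> K" "y \<in> K"
    then show "(x, y) \<in> R \<longleftrightarrow> (\<phi> x, \<phi> y) \<in> R'"
      using rank_le_rank_iff[OF LK fin(1), of x y] rank_le_rank_iff[OF LC fin(2), of "\<phi> x" "\<phi> y"]
        \<phi>_in rank_\<phi> by simp
  qed
qed

lemma linear_order_within_comparability_class:
  assumes P: "is_poset A r" and T: "trivial_poset A r" and x: "x \<in> A"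
  shows "linear_order_within (comparability_class A r x) r"
  unfolding linear_order_within_def
proof (intro conjI ballI impI)
  let ?K = "comparability_class A r x"
  fix y z u assume yzu: "y \<in> ?K" "z \<in> ?K" "u \<in> ?K"
  show "(y, y) \<in> r"
    using is_posetD(2)[OF P] yzu(1) by (auto simp: comparability_class_def)
  show "(y, z) \<in> r \<or> (z, y) \<in> r"
    using comparability_class_is_chain[OF P T x] yzu unfolding is_chain_def by blast
  show "(y, z) \<in> r \<Longrightarrow> (z, y) \<in> r \<Longrightarrow> y = z"
    using is_posetD(4)[OF P] by (rule antisymD)
  show "(y, z) \<in> r \<Longrightarrow> (z, u) \<in> r \<Longrightarrow> (y, u) \<in> r"
    using is_posetD(3)[OF P] by (rule transD)
qed

lemma linear_order_within_chain_subset: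
  "chain\<^sub>\<subseteq> F \<Longrightarrow> linear_order_within F {(E, E'). E \<subseteq> E'}"
  unfolding linear_order_within_def chain_subset_def by auto

lemma comparability_class_embedding_into_chain:
  assumes P: "is_poset A r" and T: "trivial_poset A r" and x: "x \<in> A"
    and F: "chain\<^sub>\<subseteq> F" "finite F" "card (comparability_class A r x) \<le> card F"
  obtains \<phi> where "\<forall>y\<in>comparability_class A r x. \<phi> y \<in> F"
    "\<forall>y\<in>comparability_class A r x. \<forall>z\<in>comparability_class A r x. (y, z) \<in> r \<longleftrightarrow> \<phi> y \<subseteq> \<phi> z"
proof -
  have "finite (comparability_class A r x)"
    using is_posetD(1)[OF P] by (auto simp: comparability_class_def)
  then show ?thesis
    using linear_order_within_embedding[OF linear_order_within_comparability_class[OF P T x]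
        linear_order_within_chain_subset[OF F(1)] _ F(2,3)] that
    by auto
qed

lemma trivial_poset_embedding_into_chains:
  fixes \<Phi> :: "'a set \<Rightarrow> 'b set set"
  assumes P: "is_poset A r" and T: "trivial_poset A r"
    and chains: "\<And>x. x \<in> A \<Longrightarrow> chain\<^sub>\<subseteq> (\<Phi> (comparability_class A r x))
        \<and> finite (\<Phi> (comparability_class A r x))
        \<and> card (comparability_class A r x) \<le> card (\<Phi> (comparability_class A r x))"
    and separated: "\<And>x y E E'. x \<in> A \<Longrightarrow> y \<in> A
        \<Longrightarrow> comparability_class A r x \<noteq> comparability_class A r y
        \<Longrightarrow> E \<in> \<Phi> (comparability_class A r x) \<Longrightarrow> E' \<in> \<Phi> (comparability_class A r y) \<Longrightarrow> \<not> E \<subseteq> E'"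
  obtains f where "\<forall>x\<in>A. f x \<in> \<Phi> (comparability_class A r x)"
    "\<forall>x\<in>A. \<forall>y\<in>A. (x, y) \<in> r \<longleftrightarrow> f x \<subseteq> f y"
proof -
  let ?K = "comparability_class A r"
  define good where "good K \<phi> \<longleftrightarrow> (\<forall>y\<in>K. \<phi> y \<in> \<Phi> K) \<and> (\<forall>y\<in>K. \<forall>z\<in>K. (y, z) \<in> r \<longleftrightarrow> \<phi> y \<subseteq> \<phi> z)"
    for K and \<phi> :: "'a \<Rightarrow> 'b set"
  have "\<exists>\<phi>. good (?K x) \<phi>" if x: "x \<in> A" for x
    using comparability_class_embedding_into_chain[OF P T x] chains[OF x] unfolding good_def by metis
  then have good: "good (?K x) (SOME \<phi>. good (?K x) \<phi>)" if "x \<in> A" for x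
    using someI_ex that by metis
  define f where "f x = (SOME \<phi>. good (?K x) \<phi>) x" for x
  have f_in: "f x \<in> \<Phi> (?K x)" if x: "x \<in> A" for x
    using good[OF x] comparability_class_self[OF P x] unfolding f_def good_def by blast
  have f_le_iff: "(x, y) \<in> r \<longleftrightarrow> f x \<subseteq> f y" if xy: "x \<in> A" "y \<in> A" for x y
  proof (cases "?K x = ?K y")
    case True
    define \<phi> where "\<phi> = (SOME \<phi>. good (?K x) \<phi>)"
    have "x \<in> ?K x" "y \<in> ?K x"
      using comparability_class_self[OF P] xy True by auto
    then have "(x, y) \<in> r \<longleftrightarrow> \<phi> x \<subseteq> \<phi> y"
      using good[OF xy(1)] unfolding good_def \<phi>_def by blast
    moreover have "f x = \<phi> x" "f y = \<phi> y"
      using True by (simp_all add: f_def \<phi>_def)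
    ultimately show ?thesis by simp
  next
    case False
    then have "(x, y) \<notin> r"
      using comparability_class_eq_iff[OF P T xy] unfolding incomparable_def by blast
    moreover have "\<not> f x \<subseteq> f y"
      using separated[OF xy False f_in[OF xy(1)] f_in[OF xy(2)]] .
    ultimately show ?thesis by blast
  qed
  show ?thesis
    by (rule that[of f]) (use f_in f_le_iff in blast)+
qed

section \<open>Blue chains in columns of the Boolean lattice\<close>

definition column :: "'a set \<Rightarrow> 'a set \<Rightarrow> 'a set set" where
  "column S T = (\<lambda>U. U \<union> S) ` Pow T"

definition blue_chains :: "('a set \<Rightarrow> bool) \<Rightarrow> 'a set \<Rightarrow> 'a set \<Rightarrow> 'a set set set" where
  "blue_chains c S T = {C. C \<subseteq> column S T \<and> (\<forall>E\<in>C. c E) \<and> chain\<^sub>\<subseteq> C}"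

definition longest_blue_chain :: "('a set \<Rightarrow> bool) \<Rightarrow> 'a set \<Rightarrow> 'a set \<Rightarrow> nat" where
  "longest_blue_chain c S T = Max (card ` blue_chains c S T)"

lemma column_mono: "T \<subseteq> T' \<Longrightarrow> column S T \<subseteq> column S T'"
  unfolding column_def by auto

lemma finite_blue_chains: "finite T \<Longrightarrow> finite (blue_chains c S T)"
  unfolding blue_chains_def column_def
  by (rule finite_subset[of _ "Pow ((\<lambda>U. U \<union> S) ` Pow T)"]) auto

lemma card_le_longest_blue_chain:
  "finite T \<Longrightarrow> C \<in> blue_chains c S T \<Longrightarrow> card C \<le> longest_blue_chain c S T"
  unfolding longest_blue_chain_def using finite_blue_chains by (intro Max_ge) auto

lemma longest_blue_chain_attained:
  assumes "finite T"
  obtains C where "C \<in> blue_chains c S T" "card C = longest_blue_chain c S T"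
proof -
  have "{} \<in> blue_chains c S T" by (simp add: blue_chains_def chain_subset_def)
  then have "longest_blue_chain c S T \<in> card ` blue_chains c S T"
    unfolding longest_blue_chain_def using finite_blue_chains[OF assms] by (intro Max_in) auto
  then show ?thesis using that by auto
qed

lemma longest_blue_chain_mono:
  assumes "T \<subseteq> T'" "finite T'"
  shows "longest_blue_chain c S T \<le> longest_blue_chain c S T'"
proof -
  obtain C where C: "C \<in> blue_chains c S T" "card C = longest_blue_chain c S T"
    using longest_blue_chain_attained finite_subset[OF assms] by blast
  then have "C \<in> blue_chains c S T'"
    using column_mono[OF assms(1)] unfolding blue_chains_def by blast
  then show ?thesis
    using card_le_longest_blue_chain[OF assms(2)] C(2) by metis
qed

lemma longest_blue_chain_pos:
  assumes "finite T" "c (T \<union> S)"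
  shows "1 \<le> longest_blue_chain c S T"
proof -
  have "{T \<union> S} \<in> blue_chains c S T"
    using assms(2) unfolding blue_chains_def column_def chain_subset_def by auto
  then show ?thesis
    using card_le_longest_blue_chain[OF assms(1)] by fastforce
qed

lemma finite_column: "finite T \<Longrightarrow> finite (column S T)"
  unfolding column_def by simp

text \<open>The top T \<union> S of a blue column can be added on top of any blue chain of a smaller column.\<close>

lemma longest_blue_chain_less:
  assumes T': "T' \<subset> T" and disj: "T \<inter> S = {}" and T: "finite T" and blue: "c (T \<union> S)"
  shows "longest_blue_chain c S T' < longest_blue_chain c S T"
proof -
  have fin': "finite T'" using finite_subset[OF psubset_imp_subset[OF T'] T] .
  obtain C where C: "C \<in> blue_chains c S T'" "card C = longest_blue_chain c S T'"
    using longest_blue_chain_attained[OF fin'] .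
  have C_col: "C \<subseteq> column S T'" and C_blue: "\<forall>E\<in>C. c E" and C_chain: "chain\<^sub>\<subseteq> C"
    using C(1) unfolding blue_chains_def by auto
  have below: "E \<subseteq> T' \<union> S" if "E \<in> C" for E
    using C_col that unfolding column_def by blast
  have "T \<union> S \<notin> C"
  proof
    assume "T \<union> S \<in> C"
    then have "T \<subseteq> T'" using below disj by blast
    then show False using T' by blast
  qed
  moreover have "finite C"
    using finite_subset[OF C_col finite_column[OF fin']] .
  moreover have "insert (T \<union> S) C \<in> blue_chains c S T"
    unfolding blue_chains_def
  proof (intro CollectI conjI)
    have "T \<union> S \<in> column S T" unfolding column_def by blast
    then show "insert (T \<union> S) C \<subseteq> column S T"
      using C_col column_mono[OF psubset_imp_subset[OF T']] by blast
    show "\<forall>E\<in>insert (T \<union> S) C. c E" using C_blue blue by blast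
    have "E \<subseteq> T \<union> S" if "E \<in> C" for E using below[OF that] T' by blast
    then show "chain\<^sub>\<subseteq> (insert (T \<union> S) C)"
      using C_chain unfolding chain_subset_def by blast
  qed
  ultimately show ?thesis
    using card_le_longest_blue_chain[OF T, of "insert (T \<union> S) C" c S] C(2) by simp
qed

lemma shifted_cube_embedding:
  assumes mono: "\<And>X X'. X \<subseteq> X' \<Longrightarrow> X' \<subseteq> {..<n} \<Longrightarrow> i X \<le> i X'"
    and bound: "\<And>X. X \<subseteq> {..<n} \<Longrightarrow> i X \<le> M"
    and S: "S \<subseteq> {..<N}" "S \<inter> {..<n+M} = {}" and N: "n + M \<le> N"
  shows "induced_embedding (Qcar n) (Qrel n) (Qcar N) (Qrel N) (\<lambda>X. X \<union> {n..<n + i X} \<union> S)"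
proof -
  define g where "g X = X \<union> {n..<n + i X} \<union> S" for X
  have trace: "g X \<inter> {..<n} = X" if "X \<subseteq> {..<n}" for X
    using that S(2) unfolding g_def by auto
  have range: "g X \<in> Qcar N" if "X \<in> Qcar n" for X
    using bound[of X] that S(1) N unfolding g_def Qcar_def by auto
  have le_iff: "X \<subseteq> X' \<longleftrightarrow> g X \<subseteq> g X'" if "X \<in> Qcar n" "X' \<in> Qcar n" for X X'
  proof
    assume "X \<subseteq> X'"
    then have "i X \<le> i X'" using mono that(2) by (simp add: Qcar_def)
    then show "g X \<subseteq> g X'" using \<open>X \<subseteq> X'\<close> unfolding g_def by auto
  next
    assume "g X \<subseteq> g X'"
    then show "X \<subseteq> X'" using trace that unfolding Qcar_def by blast
  qed
  have "inj_on g (Qcar n)"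
    using le_iff by (intro inj_onI) blast
  then show ?thesis
    using range le_iff unfolding induced_embedding_def Qrel_def g_def[symmetric] by auto
qed

definition blue_index :: "(nat set \<Rightarrow> bool) \<Rightarrow> nat set \<Rightarrow> nat \<Rightarrow> nat set \<Rightarrow> nat" where
  "blue_index c S n X = (LEAST i. longest_blue_chain c S (X \<union> {n..<n + i}) \<le> i)"

lemma blue_index:
  assumes short: "\<And>T. T \<subseteq> {..<n+M} \<Longrightarrow> longest_blue_chain c S T \<le> M" and X: "X \<subseteq> {..<n}"
  shows "blue_index c S n X \<le> M"
    "longest_blue_chain c S (X \<union> {n..<n + blue_index c S n X}) \<le> blue_index c S n X"
proof -
  have "longest_blue_chain c S (X \<union> {n..<n + M}) \<le> M"
    using X by (intro short) auto
  then show "blue_index c S n X \<le> M"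
    "longest_blue_chain c S (X \<union> {n..<n + blue_index c S n X}) \<le> blue_index c S n X"
    unfolding blue_index_def by (rule Least_le, rule LeastI)
qed

lemma blue_index_mono:
  assumes short: "\<And>T. T \<subseteq> {..<n+M} \<Longrightarrow> longest_blue_chain c S T \<le> M"
    and X: "X \<subseteq> X'" "X' \<subseteq> {..<n}"
  shows "blue_index c S n X \<le> blue_index c S n X'"
proof -
  let ?i = "blue_index c S n X'"
  have "longest_blue_chain c S (X \<union> {n..<n + ?i}) \<le> longest_blue_chain c S (X' \<union> {n..<n + ?i})"
    using X by (intro longest_blue_chain_mono) (auto intro: finite_subset)
  also have "\<dots> \<le> ?i" by (rule blue_index(2)[OF short X(2)])
  finally show ?thesis unfolding blue_index_def[of c S n X] by (rule Least_le)
qed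

text \<open>By minimality of the index, a blue top X \<union> {n..<n + i} \<union> S would make the longest blue
  chain jump past i.\<close>

lemma not_blue_at_blue_index:
  assumes short: "\<And>T. T \<subseteq> {..<n+M} \<Longrightarrow> longest_blue_chain c S T \<le> M"
    and S: "S \<inter> {..<n+M} = {}" and X: "X \<subseteq> {..<n}"
  shows "\<not> c (X \<union> {n..<n + blue_index c S n X} \<union> S)"
proof
  let ?b = "longest_blue_chain c S" and ?i = "blue_index c S n X"
  assume blue: "c (X \<union> {n..<n + ?i} \<union> S)"
  have fin: "finite (X \<union> {n..<n + ?i})" using X by (auto intro: finite_subset)
  show False
  proof (cases ?i)
    case 0
    then show False
      using longest_blue_chain_pos[of _ c S, OF fin blue] blue_index(2)[OF short X] by simp
  next
    case (Suc j)
    then have "\<not> ?b (X \<union> {n..<n + j}) \<le> j"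
      unfolding blue_index_def by (intro not_less_Least) simp
    moreover have "?b (X \<union> {n..<n + j}) < ?b (X \<union> {n..<n + ?i})"
    proof (rule longest_blue_chain_less[of _ _ S c, OF _ _ fin blue])
      have "n + j \<notin> X \<union> {n..<n + j}" "n + j \<in> X \<union> {n..<n + ?i}" using X Suc by auto
      then show "X \<union> {n..<n + j} \<subset> X \<union> {n..<n + ?i}" using Suc by auto
      have "X \<union> {n..<n + ?i} \<subseteq> {..<n+M}" using blue_index(1)[OF short X] X by auto
      then show "(X \<union> {n..<n + ?i}) \<inter> S = {}" using S by blast
    qed
    ultimately show False using blue_index(2)[OF short X] Suc by simp
  qed
qed

lemma red_cube_if_blue_chains_short:
  assumes S: "S \<subseteq> {..<N}" "S \<inter> {..<n+M} = {}" and N: "n + M \<le> N"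
    and short: "\<And>T. T \<subseteq> {..<n+M} \<Longrightarrow> longest_blue_chain c S T \<le> M"
  shows "\<exists>g. induced_embedding (Qcar n) (Qrel n) (Qcar N) (Qrel N) g \<and> (\<forall>X\<in>Qcar n. \<not> c (g X))"
proof -
  let ?g = "\<lambda>X. X \<union> {n..<n + blue_index c S n X} \<union> S"
  have "induced_embedding (Qcar n) (Qrel n) (Qcar N) (Qrel N) ?g"
    using blue_index_mono[OF short] blue_index(1)[OF short] S N by (rule shifted_cube_embedding)
  moreover have "\<forall>X\<in>Qcar n. \<not> c (?g X)"
    using not_blue_at_blue_index[OF short S(2)] by (simp add: Qcar_def)
  ultimately show ?thesis by blast
qed

lemma red_cube_or_long_blue_chain:
  assumes S: "S \<subseteq> {..<N}" "S \<inter> {..<n+M} = {}" and N: "n + M \<le> N"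
  shows "(\<exists>g. induced_embedding (Qcar n) (Qrel n) (Qcar N) (Qrel N) g \<and> (\<forall>X\<in>Qcar n. \<not> c (g X)))
    \<or> (\<exists>C\<in>blue_chains c S {..<n+M}. card C = Suc M)"
proof (cases "\<exists>T\<subseteq>{..<n+M}. Suc M \<le> longest_blue_chain c S T")
  case True
  then obtain T where T: "T \<subseteq> {..<n+M}" "Suc M \<le> longest_blue_chain c S T" by blast
  obtain C where C: "C \<in> blue_chains c S T" "card C = longest_blue_chain c S T"
    using longest_blue_chain_attained[OF finite_subset[OF T(1) finite_lessThan]] .
  obtain C' where C': "C' \<subseteq> C" "card C' = Suc M"
    using obtain_subset_with_card_n[of "Suc M" C] T(2) C(2) by metis
  have "C' \<in> blue_chains c S {..<n+M}"
    using C(1) C'(1) column_mono[OF T(1)] unfolding blue_chains_def chain_subset_def by blast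
  then show ?thesis using C'(2) by blast
next
  case False
  then have "longest_blue_chain c S T \<le> M" if "T \<subseteq> {..<n+M}" for T
    using that by (simp add: not_less_eq_eq)
  then show ?thesis
    using red_cube_if_blue_chains_short[OF S N] by blast
qed

section \<open>The upper bound\<close>

lemma induced_embedding_QcarI:
  assumes "antisym r" "\<forall>x\<in>A. f x \<subseteq> {..<N}" "\<forall>x\<in>A. \<forall>y\<in>A. (x, y) \<in> r \<longleftrightarrow> f x \<subseteq> f y"
  shows "induced_embedding A r (Qcar N) (Qrel N) f"
proof -
  have "inj_on f A"
    using assms by (intro inj_onI) (metis antisymD order_refl)
  then show ?thesis
    using assms(2,3) unfolding induced_embedding_def Qcar_def Qrel_def by auto
qed

lemma column_trace:
  assumes "E \<in> column S T" "T \<inter> Z = {}" "S \<subseteq> Z"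
  shows "E \<inter> Z = S"
  using assms unfolding column_def by blast

text \<open>Distinct labels of equal size are incomparable, so chains in columns over distinct labels
  are incomparable element by element.\<close>

lemma blue_copy_from_column_chains:
  assumes P: "is_poset A r" and T: "trivial_poset A r"
    and \<psi>: "\<psi> ` comparability_class A r ` A \<subseteq> L" "inj_on \<psi> (comparability_class A r ` A)"
    and L: "\<And>S. S \<in> L \<Longrightarrow> S \<subseteq> Z \<and> card S = j"
    and Z: "finite Z" "U \<inter> Z = {}" "U \<union> Z \<subseteq> {..<N}"
    and chains: "\<forall>S\<in>L. \<exists>C. C \<in> blue_chains c S U \<and> height A r \<le> card C"
  shows "\<exists>f. induced_embedding A r (Qcar N) (Qrel N) f \<and> (\<forall>x\<in>A. c (f x))"
proof -
  let ?K = "comparability_class A r"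
  obtain Ch where Ch: "\<And>S. S \<in> L \<Longrightarrow> Ch S \<in> blue_chains c S U \<and> height A r \<le> card (Ch S)"
    using bchoice[OF chains] by blast
  have label: "\<psi> (?K x) \<in> L" if "x \<in> A" for x
    using \<psi>(1) that by blast
  have column: "Ch (\<psi> (?K x)) \<subseteq> column (\<psi> (?K x)) U" if "x \<in> A" for x
    using Ch[OF label[OF that]] unfolding blue_chains_def by blast
  have in_column: "E \<subseteq> {..<N}" "E \<inter> Z = \<psi> (?K x)" if "x \<in> A" "E \<in> Ch (\<psi> (?K x))" for x E
  proof -
    have E: "E \<in> column (\<psi> (?K x)) U" using column that by blast
    have \<psi>Z: "\<psi> (?K x) \<subseteq> Z" using L[OF label[OF that(1)]] by blast
    show "E \<inter> Z = \<psi> (?K x)" using column_trace[OF E Z(2) \<psi>Z] .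
    show "E \<subseteq> {..<N}" using E \<psi>Z Z(3) unfolding column_def by blast
  qed
  obtain f where f: "\<forall>x\<in>A. f x \<in> Ch (\<psi> (?K x))" "\<forall>x\<in>A. \<forall>y\<in>A. (x, y) \<in> r \<longleftrightarrow> f x \<subseteq> f y"
  proof (rule trivial_poset_embedding_into_chains[OF P T])
    fix x assume x: "x \<in> A"
    have "finite U" using Z(3) finite_subset by blast
    then have "finite (Ch (\<psi> (?K x)))"
      using finite_subset[OF column[OF x] finite_column] by blast
    moreover have "card (?K x) \<le> height A r"
      by (rule card_le_height[OF P comparability_class_is_chain[OF P T x]])
    ultimately show "chain\<^sub>\<subseteq> (Ch (\<psi> (?K x))) \<and> finite (Ch (\<psi> (?K x))) \<and> card (?K x) \<le> card (Ch (\<psi> (?K x)))"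
      using Ch[OF label[OF x]] unfolding blue_chains_def by auto
  next
    fix x y E E' assume xy: "x \<in> A" "y \<in> A" and ne: "?K x \<noteq> ?K y"
      and E: "E \<in> Ch (\<psi> (?K x))" and E': "E' \<in> Ch (\<psi> (?K y))"
    show "\<not> E \<subseteq> E'"
    proof
      assume "E \<subseteq> E'"
      then have "\<psi> (?K x) \<subseteq> \<psi> (?K y)"
        using in_column(2)[OF xy(1) E] in_column(2)[OF xy(2) E'] by blast
      moreover have "finite (\<psi> (?K y))" "card (\<psi> (?K x)) = card (\<psi> (?K y))"
        using L[OF label[OF xy(1)]] L[OF label[OF xy(2)]] Z(1) by (auto intro: finite_subset)
      ultimately have "\<psi> (?K x) = \<psi> (?K y)" by (metis card_subset_eq)
      then show False using inj_onD[OF \<psi>(2)] xy ne by blast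
    qed
  qed
  have "\<forall>x\<in>A. f x \<subseteq> {..<N}"
    using f(1) in_column(1) by blast
  then have "induced_embedding A r (Qcar N) (Qrel N) f"
    using induced_embedding_QcarI[OF is_posetD(4)[OF P] _ f(2)] by blast
  moreover have "c (f x)" if "x \<in> A" for x
    using f(1) Ch[OF label[OF that]] that unfolding blue_chains_def by blast
  ultimately show ?thesis by blast
qed

lemma ramsey_arrow_upper_bound:
  assumes P: "is_poset A r" and T: "trivial_poset A r" and h: "1 \<le> height A r"
    and w: "width A r \<le> k choose (k div 2)"
  shows "ramsey_arrow A r (Qcar n) (Qrel n) (n + height A r - 1 + k)"
proof -
  define M where "M = height A r - 1"
  define N where "N = n + M + k"
  define Z where "Z = {n+M..<N}"
  define L where "L = {S. S \<subseteq> Z \<and> card S = k div 2}"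
  have "card Z = k" by (simp add: Z_def N_def)
  then have "card L = k choose (k div 2)"
    unfolding L_def using n_subsets[of Z] by (simp add: Z_def)
  then have "card (comparability_class A r ` A) \<le> card L"
    using card_comparability_classes_le_width[OF P T] w by simp
  moreover have "finite (comparability_class A r ` A)" "finite L"
    using is_posetD(1)[OF P] unfolding L_def Z_def by simp_all
  ultimately obtain \<psi> where \<psi>: "\<psi> ` comparability_class A r ` A \<subseteq> L"
    "inj_on \<psi> (comparability_class A r ` A)"
    by (metis card_le_inj)
  have Z: "finite Z" "{..<n+M} \<inter> Z = {}" "{..<n+M} \<union> Z \<subseteq> {..<N}"
    by (auto simp: Z_def N_def)
  have "ramsey_arrow A r (Qcar n) (Qrel n) N"
    unfolding ramsey_arrow_def
  proof (intro allI disjCI)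
    fix c :: "nat set \<Rightarrow> bool"
    assume no_red: "\<not> (\<exists>g. induced_embedding (Qcar n) (Qrel n) (Qcar N) (Qrel N) g
      \<and> (\<forall>X\<in>Qcar n. \<not> c (g X)))"
    have "\<forall>S\<in>L. \<exists>C. C \<in> blue_chains c S {..<n+M} \<and> height A r \<le> card C"
    proof
      fix S assume "S \<in> L"
      then have "S \<subseteq> {..<N}" "S \<inter> {..<n+M} = {}" "n + M \<le> N"
        unfolding L_def Z_def N_def by auto
      then show "\<exists>C. C \<in> blue_chains c S {..<n+M} \<and> height A r \<le> card C"
        using red_cube_or_long_blue_chain[of S N n M c] no_red h unfolding M_def by fastforce
    qed
    then show "\<exists>f. induced_embedding A r (Qcar N) (Qrel N) f \<and> (\<forall>x\<in>A. c (f x))"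
      using blue_copy_from_column_chains[OF P T \<psi> _ Z] unfolding L_def by blast
  qed
  then show ?thesis using h by (simp add: N_def M_def)
qed

section \<open>Central binomial coefficients\<close>

lemma central_binomial_Suc:
  "Suc j * ((2 * Suc j) choose Suc j) = 2 * (2 * j + 1) * ((2 * j) choose j)"
proof -
  have t: "2 * Suc j = Suc (Suc (2 * j))" by simp
  have "Suc j * ((2 * Suc j) choose Suc j) = Suc (Suc (2 * j)) * (Suc (2 * j) choose j)"
    unfolding t by (rule Suc_times_binomial)
  also have "\<dots> = 2 * (Suc j * (Suc (2 * j) choose Suc j))"
    using central_binomial_odd[of "Suc (2 * j)"] by (simp del: binomial_Suc_Suc)
  also have "Suc j * (Suc (2 * j) choose Suc j) = Suc (2 * j) * ((2 * j) choose j)"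
    by (rule Suc_times_binomial)
  finally show ?thesis by (simp del: binomial_Suc_Suc)
qed

lemma central_binomial_sq_lower_bound: "1 \<le> j \<Longrightarrow> 16^j \<le> ((2*j) choose j)^2 * (4*j)"
proof (induction j rule: dec_induct)
  case base
  then show ?case by (simp add: numeral_eq_Suc)
next
  case (step j)
  define B where "B = (2*j) choose j"
  define B' where "B' = (2*Suc j) choose Suc j"
  have "Suc j * 16^(Suc j) = 16 * (Suc j * 16^j)" by simp
  also have "\<dots> \<le> 16 * (Suc j * (B^2*(4*j)))" using step.IH unfolding B_def by (intro mult_le_mono2)
  also have "\<dots> \<le> 16 * ((2*j+1)^2 * B^2)"
  proof -
    have "Suc j * (4*j) \<le> (2*j+1)^2" by (simp add: power2_eq_square algebra_simps)
    hence "Suc j * (4*j) * B^2 \<le> (2*j+1)^2 * B^2" by (rule mult_right_mono) simp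
    thus ?thesis by (simp add: algebra_simps)
  qed
  also have "\<dots> = Suc j * (B'^2 * (4 * Suc j))"
  proof -
    have "(Suc j * B')^2 = (2*(2*j+1)*B)^2"
      using central_binomial_Suc[of j] by (simp add: B_def B'_def)
    thus ?thesis by (simp add: power2_eq_square algebra_simps)
  qed
  finally have "Suc j * 16^(Suc j) \<le> Suc j * (B'^2 * (4 * Suc j))" .
  thus ?case unfolding B'_def by (simp only: Suc_mult_le_cancel1)
qed

lemma middle_binomial_sq_lower_bound:
  assumes m: "1 \<le> m"
  shows "4^m \<le> (m choose (m div 2))^2 * (2*m+2)"
proof (cases "even m")
  case True
  then obtain j where j: "m = 2*j" "1 \<le> j" using m by (auto elim!: evenE)
  have "(4::nat)^m = 16^j" by (simp add: j power_mult)
  also have "\<dots> \<le> ((2*j) choose j)^2 * (4*j)" using central_binomial_sq_lower_bound j by simp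
  also have "\<dots> \<le> ((2*j) choose j)^2 * (2*m+2)" by (simp add: j)
  finally show ?thesis using j by simp
next
  case False
  then obtain j where j: "m = 2*j+1" by (auto elim!: oddE)
  define C where "C = m choose (m div 2)"
  have md: "m div 2 = j" using j by simp
  have B: "(2*Suc j) choose (Suc j) = 2*C"
  proof -
    have "(2*Suc j) choose (Suc j) = (Suc (2*j) choose j) + (Suc (2*j) choose Suc j)" by simp
    also have "Suc (2*j) choose Suc j = Suc (2*j) choose j"
      using central_binomial_odd[of "Suc (2*j)"] by simp
    finally show ?thesis by (simp add: C_def md j)
  qed
  have "16^(Suc j) \<le> (2*C)^2 * (4*Suc j)" using central_binomial_sq_lower_bound[of "Suc j"] B by simp
  moreover have "(16::nat)^Suc j = 4 * 4^m" by (simp add: j power_add power_mult)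
  moreover have "(2*C)^2 * (4*Suc j) = 4 * (C^2 * (2*m+2))" by (simp add: j power2_eq_square algebra_simps)
  ultimately have "4 * 4^m \<le> 4 * (C^2 * (2*m+2))" by simp
  thus ?thesis by (simp add: C_def)
qed

lemma Suc_le_two_power: "5 \<le> m \<Longrightarrow> m + 1 \<le> (2::nat) ^ (m - 2)"
proof (induction m rule: dec_induct)
  case (step m)
  then have "Suc m - 2 = Suc (m - 2)" by simp
  then show ?case using step.IH by simp
qed simp

lemma index_bound_of_middle_binomial_less_small:
  assumes w: "2 \<le> w" and m: "1 \<le> m" "m \<le> 4" and less: "m choose (m div 2) < w"
  shows "real m - 1 < log 2 (real w) + 1/2 * log 2 (log 2 (real w))"
proof -
  have lw: "1 \<le> log 2 (real w)" using w by (simp add: le_log_iff)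
  consider "m = 1" | "m = 2" | "m = 3" | "m = 4" using m by linarith
  then show ?thesis
  proof cases
    case 1
    have "0 \<le> log 2 (log 2 (real w))" using lw by simp
    then show ?thesis using 1 lw by linarith
  next
    case 2
    then have "1 < log 2 (real w)" using less by (simp add: less_log_iff numeral_eq_Suc)
    then have "0 < log 2 (log 2 (real w))" by simp
    then show ?thesis using 2 \<open>1 < log 2 (real w)\<close> by linarith
  next
    case 3
    have "(3::nat) choose (3 div 2) = 3" by simp
    then have "4 \<le> w" using less 3 by simp
    then have "2 \<le> log 2 (real w)" by (simp add: le_log_iff)
    then have "1 \<le> log 2 (log 2 (real w))" by (simp add: le_log_iff)
    then show ?thesis using 3 \<open>2 \<le> log 2 (real w)\<close> by linarith
  next
    case 4
    have "4 choose 2 = (6::nat)" by (simp add: numeral_eq_Suc)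
    then have "7 \<le> w" using less 4 by simp
    have "(2::real) powr (5/2) = 2 powr 2 * 2 powr (1/2)"
      using powr_add[of "2::real" 2 "1/2"] by simp
    also have "\<dots> = 4 * sqrt 2" by (simp add: powr_half_sqrt)
    also have "\<dots> < 7"
    proof -
      have "sqrt 2 < 7/4" by (rule real_less_lsqrt) (auto simp: power2_eq_square)
      then show ?thesis by simp
    qed
    finally have "2 powr (5/2) < real w"
      using \<open>7 \<le> w\<close> by linarith
    then have "5/2 < log 2 (real w)"
      using w by (subst less_log_iff) auto
    then have "1 < log 2 (log 2 (real w))" by (simp add: less_log_iff)
    then show ?thesis using 4 \<open>5/2 < log 2 (real w)\<close> by linarith
  qed
qed

lemma index_bound_of_middle_binomial_less_large:
  assumes w: "2 \<le> w" and m: "5 \<le> m" and less: "m choose (m div 2) < w"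
  shows "real m - 1 < log 2 (real w) + 1/2 * log 2 (log 2 (real w))"
proof -
  define lw where "lw = log 2 (real w)"
  define lm where "lm = log 2 (real m + 1)"
  have "real (4 ^ m) \<le> real ((m choose (m div 2))\<^sup>2 * (2 * m + 2))"
    using middle_binomial_sq_lower_bound m by (simp only: of_nat_le_iff)
  then have "(4::real) ^ m \<le> (real (m choose (m div 2)))\<^sup>2 * (2 * real m + 2)"
    by (simp add: algebra_simps)
  also have "\<dots> < real w ^ 2 * (2 * real m + 2)"
    using less by (intro mult_strict_right_mono power_strict_mono) auto
  finally have "log 2 ((4::real) ^ m) < log 2 (real w ^ 2 * (2 * (real m + 1)))"
    by (intro log_less) (auto simp: algebra_simps)
  moreover have "(4::real) ^ m = 2 powr (2 * m)"
    by (simp add: powr_realpow[symmetric] powr_mult[symmetric] flip: powr_powr)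
  then have "log 2 ((4::real) ^ m) = 2 * m" by simp
  moreover have "log 2 (real w ^ 2 * (2 * (real m + 1))) = 2 * lw + 1 + lm"
  proof -
    have "log 2 (real w ^ 2 * (2 * (real m + 1))) = log 2 (real w ^ 2) + log 2 (2 * (real m + 1))"
      using w by (subst log_mult) auto
    also have "log 2 (real w ^ 2) = 2 * lw" using w by (simp add: log_nat_power lw_def)
    also have "log 2 (2 * (real m + 1)) = 1 + lm" by (subst log_mult) (auto simp: lm_def)
    finally show ?thesis by simp
  qed
  ultimately have lw_gt: "real m - 1/2 - lm / 2 < lw" by simp
  have "real (m + 1) \<le> real ((2::nat) ^ (m - 2))"
    using Suc_le_two_power[OF m] by (simp only: of_nat_le_iff)
  also have "\<dots> = 2 powr (real (m - 2))" by (simp add: powr_realpow)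
  also have "real (m - 2) = real m - 2" using m by simp
  finally have "real m + 1 \<le> 2 powr (real m - 2)" by simp
  then have "lm \<le> real m - 2" unfolding lm_def by (simp add: le_powr_iff)
  then have "(real m + 1) / 2 \<le> real m - 1/2 - lm / 2" by simp
  then have "log 2 ((real m + 1) / 2) < log 2 lw"
    using lw_gt by (intro log_less) auto
  then have "lm - 1 < log 2 lw"
    by (simp add: log_divide lm_def)
  then show ?thesis using lw_gt unfolding lw_def by simp
qed

lemma exists_middle_binomial_ge:
  assumes w: "2 \<le> w"
  obtains k where "w \<le> k choose (k div 2)"
    "real k < log 2 (real w) + 1/2 * log 2 (log 2 (real w)) + 2"
proof -
  define k where "k = (LEAST k. w \<le> k choose (k div 2))"
  have "w \<le> w choose (w div 2)"
    using binomial_maximum[of w 1] by simp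
  then have k: "w \<le> k choose (k div 2)"
    unfolding k_def by (rule LeastI)
  have "2 \<le> k"
  proof (rule ccontr)
    assume "\<not> 2 \<le> k"
    then have "k = 0 \<or> k = 1" by auto
    then show False using k w by auto
  qed
  then obtain m where m: "k = Suc m" "1 \<le> m" by (cases k) auto
  have "\<not> w \<le> m choose (m div 2)"
    unfolding k_def using m(1) unfolding k_def by (intro not_less_Least) simp
  then have "real m - 1 < log 2 (real w) + 1/2 * log 2 (log 2 (real w))"
    using index_bound_of_middle_binomial_less_small[OF w m(2)] index_bound_of_middle_binomial_less_large[OF w] by (cases "m \<le> 4") auto
  then show ?thesis using that k m(1) by simp
qed

lemma poset_ramsey_le:
  "ramsey_arrow A r B s N \<Longrightarrow> poset_ramsey A r B s \<le> N"
  unfolding poset_ramsey_def by (rule Least_le)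

lemma poset_ramsey_ge:
  assumes "ramsey_arrow A r B s N" "\<And>N'. N' < L \<Longrightarrow> \<not> ramsey_arrow A r B s N'"
  shows "L \<le> poset_ramsey A r B s"
  using LeastI[of "ramsey_arrow A r B s", OF assms(1)] assms(2)
  unfolding poset_ramsey_def by (meson not_le)

theorem corollary7:
  fixes A :: "'a set" and r :: "('a \<times> 'a) set"
  assumes "is_poset A r" and "trivial_poset A r"
  shows "(width A r = 1 \<longrightarrow>
            (\<forall>n::nat. n \<ge> 1 \<longrightarrow>
               poset_ramsey A r (Qcar n) (Qrel n) = n + height A r - 1))
       \<and> (width A r \<ge> 2 \<longrightarrow>
            (\<forall>n::nat. n \<ge> 1 \<longrightarrow>
               n + height A r + 1 \<le> poset_ramsey A r (Qcar n) (Qrel n) \<and>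
               real (poset_ramsey A r (Qcar n) (Qrel n)) <
                 real n + real (height A r) + log 2 (real (width A r))
                 + 1/2 * log 2 (log 2 (real (width A r))) + 1))"
proof (intro conjI impI allI)
  fix n :: nat
  assume w: "width A r = 1"
  then have h: "1 \<le> height A r" using height_pos_if_width_pos[OF assms(1)] by simp
  have arrow: "ramsey_arrow A r (Qcar n) (Qrel n) (n + height A r - 1)"
    using ramsey_arrow_upper_bound[OF assms h, of 0 n] w by simp
  have "\<not> ramsey_arrow A r (Qcar n) (Qrel n) N" if "N < n + height A r - 1" for N
    using not_ramsey_arrow_below_height[OF assms(1) h] that by simp
  then show "poset_ramsey A r (Qcar n) (Qrel n) = n + height A r - 1"
    using poset_ramsey_le[OF arrow] poset_ramsey_ge[OF arrow] by (meson antisym)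
next
  fix n :: nat
  assume w: "2 \<le> width A r"
  then have h: "1 \<le> height A r" using height_pos_if_width_pos[OF assms(1)] by simp
  obtain k where k: "width A r \<le> k choose (k div 2)"
    "real k < log 2 (real (width A r)) + 1/2 * log 2 (log 2 (real (width A r))) + 2"
    using exists_middle_binomial_ge[OF w] .
  have arrow: "ramsey_arrow A r (Qcar n) (Qrel n) (n + height A r - 1 + k)"
    using ramsey_arrow_upper_bound[OF assms h k(1)] .
  show "n + height A r + 1 \<le> poset_ramsey A r (Qcar n) (Qrel n)"
    using poset_ramsey_ge[OF arrow] not_ramsey_arrow_at_height[OF assms w] by simp
  show "real (poset_ramsey A r (Qcar n) (Qrel n)) < real n + real (height A r)
      + log 2 (real (width A r)) + 1/2 * log 2 (log 2 (real (width A r))) + 1"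
    using poset_ramsey_le[OF arrow] h k(2) by linarith
qed

end
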